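(* Let $\mathcal{M}$ be a minimally $k$-level matroid on ground set $E$ and $F$ a $k$-level flacet of $\mathcal{M}$. Then $\overline{F}:=E\setminus F$ satisfies $\operatorname{rk}(\overline{F})=|\overline{F}|$, i.e. $\overline{F}$ is independent.
   Context: Levelness of a matroid $\mathcal{M}=(E,\mathcal{B})$: the least $k$ such that every facet-defining affine function takes at most $k$ distinct values on $V_{\mathcal{M}}=\{\mathbf{1}_B:B\in\mathcal{B}\}$ (facets are inclusion-maximal faces $\{v\in V_{\mathcal{M}}:\ell(v)=0\}\neq V_{\mathcal{M}}$ for affine $\ell\ge0$ on $V_{\mathcal{M}}$). $\mathcal{M}$ is minimally $k$-level if its levelness is $k$ and every proper minor has strictly smaller levelness. A flacet is a flat $\emptyset\neq S\subsetneq E$ such that the restriction $\mathcal{M}|_S$ and contraction $\mathcal{M}/S$ are connected; a flacet $F$ is $k$-level if $\ell_F(x)=\sum_{e\in F}x_e$ takes exactly $k$ distinct values on $V_{\mathcal{M}}$. *)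

theory Defs
  imports Main "HOL-Library.Indicator_Function"
begin

definition matroid :: "'a set \<Rightarrow> 'a set set \<Rightarrow> bool" where
  "matroid E Bs \<longleftrightarrow> finite E \<and> Bs \<noteq> {} \<and> (\<forall>B\<in>Bs. B \<subseteq> E) \<and>
     (\<forall>B1\<in>Bs. \<forall>B2\<in>Bs. \<forall>x\<in>B1 - B2. \<exists>y\<in>B2 - B1. insert y (B1 - {x}) \<in> Bs)"

definition indep :: "'a set set \<Rightarrow> 'a set \<Rightarrow> bool" where
  "indep Bs X \<longleftrightarrow> (\<exists>B\<in>Bs. X \<subseteq> B)"

definition rk :: "'a set set \<Rightarrow> 'a set \<Rightarrow> nat" where
  "rk Bs X = Max (card ` {I. I \<subseteq> X \<and> indep Bs I})"

text \<open>Bases of the restriction M|S (ground set S) and of the contraction M/C (ground set E - C).\<close>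

definition restrict_bases :: "'a set set \<Rightarrow> 'a set \<Rightarrow> 'a set set" where
  "restrict_bases Bs S = {I. I \<subseteq> S \<and> indep Bs I \<and> card I = rk Bs S}"

definition contract_bases :: "'a set set \<Rightarrow> 'a set \<Rightarrow> 'a set set" where
  "contract_bases Bs C = {B - C | B. B \<in> Bs \<and> card (B \<inter> C) = rk Bs C}"

definition proper_minor :: "'a set \<Rightarrow> 'a set set \<Rightarrow> 'a set \<Rightarrow> 'a set set \<Rightarrow> bool" where
  "proper_minor E Bs E' Bs' \<longleftrightarrow>
     (\<exists>C D. C \<subseteq> E \<and> D \<subseteq> E \<and> C \<inter> D = {} \<and> C \<union> D \<noteq> {} \<and>
        E' = E - C - D \<and> Bs' = restrict_bases (contract_bases Bs C) (E - C - D))"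

definition connected_matroid :: "'a set \<Rightarrow> 'a set set \<Rightarrow> bool" where
  "connected_matroid E Bs \<longleftrightarrow>
     \<not> (\<exists>S. S \<noteq> {} \<and> S \<subset> E \<and> rk Bs S + rk Bs (E - S) = rk Bs E)"

definition flat :: "'a set \<Rightarrow> 'a set set \<Rightarrow> 'a set \<Rightarrow> bool" where
  "flat E Bs S \<longleftrightarrow> S \<subseteq> E \<and> (\<forall>e\<in>E - S. rk Bs (insert e S) > rk Bs S)"

definition flacet :: "'a set \<Rightarrow> 'a set set \<Rightarrow> 'a set \<Rightarrow> bool" where
  "flacet E Bs S \<longleftrightarrow> S \<noteq> {} \<and> S \<subset> E \<and> flat E Bs S \<and>
     connected_matroid S (restrict_bases Bs S) \<and>
     connected_matroid (E - S) (contract_bases Bs S)"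

definition vertices :: "'a set set \<Rightarrow> ('a \<Rightarrow> real) set" where
  "vertices Bs = (\<lambda>B. indicator B) ` Bs"

definition aff :: "'a set \<Rightarrow> ('a \<Rightarrow> real) \<Rightarrow> real \<Rightarrow> ('a \<Rightarrow> real) \<Rightarrow> real" where
  "aff E a c x = c + (\<Sum>e\<in>E. a e * x e)"

definition is_face :: "'a set \<Rightarrow> ('a \<Rightarrow> real) set \<Rightarrow> ('a \<Rightarrow> real) set \<Rightarrow> bool" where
  "is_face E V Z \<longleftrightarrow> (\<exists>a c. (\<forall>v\<in>V. aff E a c v \<ge> 0) \<and> Z = {v\<in>V. aff E a c v = 0})"

definition is_facet :: "'a set \<Rightarrow> ('a \<Rightarrow> real) set \<Rightarrow> ('a \<Rightarrow> real) set \<Rightarrow> bool" where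
  "is_facet E V Z \<longleftrightarrow> is_face E V Z \<and> Z \<noteq> V \<and>
     (\<forall>Z'. is_face E V Z' \<and> Z' \<noteq> V \<and> Z \<subseteq> Z' \<longrightarrow> Z' = Z)"

definition facet_defining :: "'a set \<Rightarrow> ('a \<Rightarrow> real) set \<Rightarrow> ('a \<Rightarrow> real) \<Rightarrow> real \<Rightarrow> bool" where
  "facet_defining E V a c \<longleftrightarrow> (\<forall>v\<in>V. aff E a c v \<ge> 0) \<and> is_facet E V {v\<in>V. aff E a c v = 0}"

definition levelness :: "'a set \<Rightarrow> 'a set set \<Rightarrow> nat" where
  "levelness E Bs = (LEAST k. \<forall>a c. facet_defining E (vertices Bs) a c \<longrightarrow>
                        card (aff E a c ` vertices Bs) \<le> k)"

definition minimally_level :: "'a set \<Rightarrow> 'a set set \<Rightarrow> nat \<Rightarrow> bool" where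
  "minimally_level E Bs k \<longleftrightarrow> levelness E Bs = k \<and>
     (\<forall>E' Bs'. proper_minor E Bs E' Bs' \<longrightarrow> levelness E' Bs' < k)"

definition k_level_flacet :: "'a set \<Rightarrow> 'a set set \<Rightarrow> nat \<Rightarrow> 'a set \<Rightarrow> bool" where
  "k_level_flacet E Bs k F \<longleftrightarrow> flacet E Bs F \<and>
     card ((\<lambda>x. \<Sum>e\<in>F. x e) ` vertices Bs) = k"

end

theory Submission
  imports Defs
begin

text \<open>If E - F were dependent, some e \<in> E - F could be deleted from E - F without lowering its rank.
  By Tutte's theorem one of (M/F) \ e and (M/F) / e is connected, so F is still a flacet of M \ e or of
  M / e (the restriction to F is unchanged because F is a flat avoiding e). The number of values of
  the coordinate sum over F is r(F) + r(E - F) - r(E) + 1 by basis exchange, and it is the same k in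
  that minor. A flacet with at least two levels defines a facet, since connectivity of M|F and M/F
  forces every inequality tight on the F-maximal bases to be constant on F and on E - F. Hence that
  proper minor has levelness at least k, contradicting minimality; k \<ge> 2 because even the empty
  minor is 1-level.\<close>

section \<open>Rank functions and connectivity\<close>

definition contract_rank :: "'a set set \<Rightarrow> 'a set \<Rightarrow> 'a set \<Rightarrow> nat" where
  "contract_rank Bs C X = rk Bs (X \<union> C) - rk Bs C"

definition rank_connected :: "'a set \<Rightarrow> ('a set \<Rightarrow> nat) \<Rightarrow> bool" where
  "rank_connected G \<rho> \<longleftrightarrow> \<not> (\<exists>S. S \<noteq> {} \<and> S \<subset> G \<and> \<rho> S + \<rho> (G - S) = \<rho> G)"

lemma connected_matroid_iff_rank_connected: "connected_matroid E Bs \<longleftrightarrow> rank_connected E (rk Bs)"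
  unfolding connected_matroid_def rank_connected_def ..

lemma rank_connected_cong:
  assumes "\<And>X. X \<subseteq> G \<Longrightarrow> \<rho> X = \<sigma> X"
  shows "rank_connected G \<rho> \<longleftrightarrow> rank_connected G \<sigma>"
proof -
  have "\<rho> S + \<rho> (G - S) = \<rho> G \<longleftrightarrow> \<sigma> S + \<sigma> (G - S) = \<sigma> G" if "S \<subset> G" for S
    using that assms[of S] assms[of "G - S"] assms[of G] by auto
  then show ?thesis unfolding rank_connected_def by blast
qed

text \<open>Tutte's theorem, for any monotone submodular rank function. Given separations A | A' of G - e
  and B | B' of G / e, submodularity shows that in each pair of opposite quarters A \<inter> B, A' \<inter> B' and
  A \<inter> B', A' \<inter> B one is empty, which empties one of A, A', B, B'.\<close>

lemma rank_connected_delete_or_contract: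
  fixes \<rho> :: "'a set \<Rightarrow> nat"
  assumes submod: "\<And>X Y. X \<subseteq> G \<Longrightarrow> Y \<subseteq> G \<Longrightarrow> \<rho> (X \<union> Y) + \<rho> (X \<inter> Y) \<le> \<rho> X + \<rho> Y"
    and mono: "\<And>X Y. X \<subseteq> Y \<Longrightarrow> Y \<subseteq> G \<Longrightarrow> \<rho> X \<le> \<rho> Y"
    and empty: "\<rho> {} = 0" and e: "e \<in> G" and rank_e: "\<rho> {e} \<le> 1"
    and noncoloop: "\<rho> (G - {e}) = \<rho> G"
    and conn: "rank_connected G \<rho>"
  shows "rank_connected (G - {e}) \<rho> \<or> rank_connected (G - {e}) (\<lambda>X. \<rho> (insert e X) - \<rho> {e})"
proof (rule ccontr)
  assume "\<not> ?thesis"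
  then obtain A B where A: "A \<noteq> {}" "A \<subset> G - {e}" "\<rho> A + \<rho> (G - {e} - A) = \<rho> (G - {e})"
    and B: "B \<noteq> {}" "B \<subset> G - {e}"
      "(\<rho> (insert e B) - \<rho> {e}) + (\<rho> (insert e (G - {e} - B)) - \<rho> {e}) = \<rho> (insert e (G - {e})) - \<rho> {e}"
    unfolding rank_connected_def by blast
  define A' where "A' = G - {e} - A"
  define B' where "B' = G - {e} - B"
  have sep_A: "\<rho> A + \<rho> A' = \<rho> G" using A(3) noncoloop unfolding A'_def by simp
  have "insert e B \<subseteq> G" "insert e B' \<subseteq> G" using e B(2) unfolding B'_def by auto
  then have "\<rho> {e} \<le> \<rho> (insert e B)" "\<rho> {e} \<le> \<rho> (insert e B')" "\<rho> {e} \<le> \<rho> G"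
    using mono e by auto
  moreover have "insert e (G - {e}) = G" using e by blast
  ultimately have sep_B: "\<rho> (insert e B) + \<rho> (insert e B') = \<rho> G + \<rho> {e}"
    using B(3) unfolding B'_def by simp
  have gap: "\<rho> G + 1 \<le> \<rho> X + \<rho> (G - X)" if "X \<noteq> {}" "X \<subseteq> G - {e}" for X
  proof -
    have "X \<subseteq> G" "X \<subset> G" using that e by auto
    then have "\<rho> G \<le> \<rho> X + \<rho> (G - X)" using submod[of X "G - X"] empty by (simp add: Un_absorb1)
    moreover have "\<rho> X + \<rho> (G - X) \<noteq> \<rho> G"
      using conn \<open>X \<subset> G\<close> \<open>X \<noteq> {}\<close> unfolding rank_connected_def by blast
    ultimately show ?thesis by linarith
  qed
  have cross: "A \<inter> C = {} \<or> A' \<inter> C' = {}"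
    if C: "C \<union> C' = G - {e}" "C \<inter> C' = {}" "\<rho> (insert e C) + \<rho> (insert e C') = \<rho> G + \<rho> {e}" for C C'
  proof (rule ccontr)
    assume "\<not> ?thesis"
    moreover have "A \<inter> C \<subseteq> G - {e}" "A' \<inter> C' \<subseteq> G - {e}" using A(2) unfolding A'_def by auto
    ultimately have "\<rho> G + 1 \<le> \<rho> (A \<inter> C) + \<rho> (G - (A \<inter> C))" "\<rho> G + 1 \<le> \<rho> (A' \<inter> C') + \<rho> (G - (A' \<inter> C'))"
      using gap[of "A \<inter> C"] gap[of "A' \<inter> C'"] by auto
    moreover have "A \<union> insert e C = G - (A' \<inter> C')" "A \<inter> insert e C = A \<inter> C"
      "A' \<union> insert e C' = G - (A \<inter> C)" "A' \<inter> insert e C' = A' \<inter> C'"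
      using A(2) C(1,2) e unfolding A'_def by auto
    moreover have "A \<subseteq> G" "A' \<subseteq> G" "insert e C \<subseteq> G" "insert e C' \<subseteq> G"
      using A(2) C(1) e unfolding A'_def by auto
    ultimately have "\<rho> G + 1 + (\<rho> G + 1) \<le> \<rho> A + \<rho> (insert e C) + (\<rho> A' + \<rho> (insert e C'))"
      using submod[of A "insert e C"] submod[of A' "insert e C'"] by simp
    then show False using sep_A C(3) rank_e by simp
  qed
  have "A \<inter> B = {} \<or> A' \<inter> B' = {}" "A \<inter> B' = {} \<or> A' \<inter> B = {}"
    using cross[of B B'] cross[of B' B] sep_B B(2) unfolding B'_def by (auto simp: add.commute)
  moreover have "A' \<noteq> {}" "B' \<noteq> {}" using A(2) B(2) unfolding A'_def B'_def by auto
  ultimately show False using A(1,2) B(1,2) unfolding A'_def B'_def by blast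
qed

section \<open>Vertices, faces and levels\<close>

lemma card_exchange_Int_le:
  assumes "finite B"
  shows "card (insert y (B - {x}) \<inter> F) \<le> card (B \<inter> F) + 1"
    and "card (B \<inter> F) \<le> card (insert y (B - {x}) \<inter> F) + 1"
proof -
  have "insert y (B - {x}) \<inter> F \<subseteq> insert y (B \<inter> F)" by blast
  then have "card (insert y (B - {x}) \<inter> F) \<le> card (insert y (B \<inter> F))"
    using assms by (intro card_mono) auto
  also have "\<dots> \<le> card (B \<inter> F) + 1" using assms by (simp add: card_insert_if)
  finally show "card (insert y (B - {x}) \<inter> F) \<le> card (B \<inter> F) + 1" .
  have "B \<inter> F \<subseteq> insert x (insert y (B - {x}) \<inter> F)" by blast
  then have "card (B \<inter> F) \<le> card (insert x (insert y (B - {x}) \<inter> F))"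
    using assms by (intro card_mono) auto
  also have "\<dots> \<le> card (insert y (B - {x}) \<inter> F) + 1" using assms by (simp add: card_insert_if)
  finally show "card (B \<inter> F) \<le> card (insert y (B - {x}) \<inter> F) + 1" .
qed

lemma sum_indicator_eq_card:
  "finite F \<Longrightarrow> (\<Sum>e\<in>F. (indicator B e :: real)) = real (card (B \<inter> F))"
  unfolding indicator_def using sum.inter_restrict[of F "\<lambda>_. (1::real)" B]
  by (simp add: Int_commute of_bool_def)

lemma aff_indicator:
  assumes "finite E" "B \<subseteq> E"
  shows "aff E a c (indicator B) = c + sum a B"
proof -
  have "(\<Sum>e\<in>E. a e * indicator B e) = (\<Sum>e\<in>E. if e \<in> B then a e else 0)"
    by (intro sum.cong) (auto simp: indicator_def)
  also have "\<dots> = sum a (E \<inter> B)" by (rule sum.inter_restrict[OF assms(1), symmetric])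
  finally have "(\<Sum>e\<in>E. a e * indicator B e) = sum a (E \<inter> B)" .
  then show ?thesis unfolding aff_def using assms(2) by (simp add: Int_absorb1)
qed

lemma card_aff_image_le_levelness:
  assumes "finite Bs" and "facet_defining E (vertices Bs) a c"
  shows "card (aff E a c ` vertices Bs) \<le> levelness E Bs"
proof -
  let ?P = "\<lambda>k. \<forall>a c. facet_defining E (vertices Bs) a c \<longrightarrow> card (aff E a c ` vertices Bs) \<le> k"
  have "?P (card (vertices Bs))"
    using card_image_le assms(1) unfolding vertices_def by (metis finite_imageI)
  then have "?P (levelness E Bs)" unfolding levelness_def by (rule LeastI)
  then show ?thesis using assms(2) by blast
qed

lemma levelness_empty_matroid_pos: "1 \<le> levelness {} {{}}"
proof -
  have vertices: "vertices {{}} = {indicator {}}" unfolding vertices_def by simp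
  have aff_one: "aff {} (\<lambda>_. 0) 1 v = 1" for v :: "'a \<Rightarrow> real" unfolding aff_def by simp
  then have "is_face ({} :: 'a set) {indicator {}} {}"
    unfolding is_face_def by (intro exI[of _ "\<lambda>_. 0"] exI[of _ 1]) simp
  then have "is_facet ({} :: 'a set) {indicator {}} {}"
    unfolding is_facet_def is_face_def by auto
  then have "facet_defining ({} :: 'a set) (vertices {{}}) (\<lambda>_. 0) 1"
    unfolding facet_defining_def vertices by (simp add: aff_def)
  from card_aff_image_le_levelness[OF _ this] show ?thesis
    unfolding vertices by simp
qed

section \<open>Matroids given by their bases\<close>

locale matroid_bases =
  fixes E :: "'a set" and Bs :: "'a set set"
  assumes matroid: "matroid E Bs"
begin

lemma finite_ground: "finite E"
  and bases_nonempty: "Bs \<noteq> {}"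
  and base_subset: "B \<in> Bs \<Longrightarrow> B \<subseteq> E"
  and base_exchange: "B1 \<in> Bs \<Longrightarrow> B2 \<in> Bs \<Longrightarrow> x \<in> B1 - B2 \<Longrightarrow>
                       \<exists>y\<in>B2 - B1. insert y (B1 - {x}) \<in> Bs"
  using matroid unfolding matroid_def by auto

lemma finite_base: "B \<in> Bs \<Longrightarrow> finite B"
  using finite_ground base_subset finite_subset by blast

lemma finite_bases: "finite Bs"
  using finite_ground base_subset by (intro finite_subset[of Bs "Pow E"]) auto

lemma base_subset_eq: "B1 \<in> Bs \<Longrightarrow> B2 \<in> Bs \<Longrightarrow> B1 \<subseteq> B2 \<Longrightarrow> B1 = B2"
  using base_exchange[of B2 B1] by blast

lemma base_exchange_induct [consumes 2, case_names target exchange]: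
  assumes "B1 \<in> Bs" "B2 \<in> Bs"
    and target: "P B2"
    and exchange: "\<And>B x y. B \<in> Bs \<Longrightarrow> x \<in> B - B2 \<Longrightarrow> y \<in> B2 - B \<Longrightarrow>
                     insert y (B - {x}) \<in> Bs \<Longrightarrow> P (insert y (B - {x})) \<Longrightarrow> P B"
  shows "P B1"
proof -
  have "P B" if "B \<in> Bs" "card (B - B2) = n" for n B
    using that
  proof (induction n arbitrary: B)
    case 0
    then have "B = B2"
      using base_subset_eq[OF _ \<open>B2 \<in> Bs\<close>] finite_base by auto
    then show ?case using target by simp
  next
    case (Suc n)
    then have "B - B2 \<noteq> {}" by (metis card.empty nat.simps(3))
    then obtain x where x: "x \<in> B - B2" by blast
    then obtain y where y: "y \<in> B2 - B" and B': "insert y (B - {x}) \<in> Bs"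
      using base_exchange[OF Suc.prems(1) \<open>B2 \<in> Bs\<close>] by blast
    have "insert y (B - {x}) - B2 = B - B2 - {x}" using y by auto
    then have "card (insert y (B - {x}) - B2) = n"
      using Suc.prems x finite_base by simp
    then show ?case using exchange[OF Suc.prems(1) x y B'] Suc.IH[OF B'] by blast
  qed
  then show ?thesis using \<open>B1 \<in> Bs\<close> by blast
qed

lemma bases_card_eq: "B1 \<in> Bs \<Longrightarrow> B2 \<in> Bs \<Longrightarrow> card B1 = card B2"
proof (induction B1 rule: base_exchange_induct)
  case (exchange B x y)
  then have "card B > 0" using finite_base card_gt_0_iff by blast
  with exchange show ?case using finite_base[of B] by simp
qed simp

lemma indep_subset: "indep Bs I \<Longrightarrow> J \<subseteq> I \<Longrightarrow> indep Bs J"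
  unfolding indep_def by blast

lemma indep_subset_ground: "indep Bs I \<Longrightarrow> I \<subseteq> E"
  unfolding indep_def using base_subset by blast

lemma finite_indep: "indep Bs I \<Longrightarrow> finite I"
  using indep_subset_ground finite_ground finite_subset by blast

lemma indep_empty: "indep Bs {}"
  using bases_nonempty unfolding indep_def by blast

lemma indep_base: "B \<in> Bs \<Longrightarrow> indep Bs B"
  unfolding indep_def by blast

lemma indep_base_Int: "B \<in> Bs \<Longrightarrow> indep Bs (B \<inter> X)"
  unfolding indep_def by blast

lemma indep_card_le_base:
  assumes "indep Bs I" "B \<in> Bs" shows "card I \<le> card B"
proof -
  obtain B0 where "B0 \<in> Bs" "I \<subseteq> B0" using assms(1) unfolding indep_def by blast
  then show ?thesis using bases_card_eq[OF _ assms(2)] card_mono[OF finite_base] by fastforce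
qed

lemma indep_card_eq_base_imp_base:
  assumes "indep Bs I" "B \<in> Bs" "card I = card B" shows "I \<in> Bs"
proof -
  obtain B0 where "B0 \<in> Bs" "I \<subseteq> B0" using assms(1) unfolding indep_def by blast
  moreover have "card I = card B0" using bases_card_eq[OF \<open>B0 \<in> Bs\<close> assms(2)] assms(3) by simp
  ultimately show ?thesis using card_subset_eq[OF finite_base] by metis
qed

lemma indep_augment:
  assumes I: "indep Bs I" and J: "indep Bs J" and less: "card I < card J"
  shows "\<exists>y\<in>J - I. indep Bs (insert y I)"
proof (rule ccontr)
  assume no_aug: "\<not> ?thesis"
  define P where "P = (\<lambda>(B1, B2). B1 \<in> Bs \<and> B2 \<in> Bs \<and> I \<subseteq> B1 \<and> J \<subseteq> B2)"
  obtain p where "P p" using I J unfolding indep_def P_def by auto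
  then obtain C1 C2 where P: "P (C1, C2)"
    and min: "\<And>D1 D2. P (D1, D2) \<Longrightarrow> card (C2 - C1) \<le> card (D2 - D1)"
    using ex_has_least_nat[of P p "\<lambda>(B1, B2). card (B2 - B1)"] by fastforce
  then have C1: "C1 \<in> Bs" "I \<subseteq> C1" and C2: "C2 \<in> Bs" "J \<subseteq> C2"
    unfolding P_def by auto
  have "(J - I) \<inter> C1 = {}"
    using no_aug C1 unfolding indep_def by blast
  moreover have "C1 - I \<subseteq> C2"
  proof
    fix x assume x: "x \<in> C1 - I"
    show "x \<in> C2"
    proof (rule ccontr)
      assume "x \<notin> C2"
      then obtain y where y: "y \<in> C2 - C1" and C1': "insert y (C1 - {x}) \<in> Bs"
        using base_exchange[OF C1(1) C2(1), of x] x by blast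
      have "P (insert y (C1 - {x}), C2)" using C1' C1 C2 x unfolding P_def by auto
      moreover have "C2 - insert y (C1 - {x}) = C2 - C1 - {y}" using \<open>x \<notin> C2\<close> by blast
      ultimately have "card (C2 - C1) \<le> card (C2 - C1 - {y})" using min by fastforce
      moreover have "card (C2 - C1 - {y}) < card (C2 - C1)"
        using y finite_base[OF C2(1)] card_Diff1_less[of "C2 - C1" y] by blast
      ultimately show False by simp
    qed
  qed
  ultimately have "C1 - I \<subseteq> C2 - J" by blast
  then have "card (C1 - I) \<le> card (C2 - J)"
    using finite_base[OF C2(1)] by (simp add: card_mono)
  moreover have "card C1 = card I + card (C1 - I)" "card C2 = card J + card (C2 - J)"
    using C1 C2 finite_base card_Diff_subset card_mono finite_subset
    by (metis le_add_diff_inverse)+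
  ultimately show False using less bases_card_eq[OF C1(1) C2(1)] by linarith
qed

lemma finite_card_indep_subsets: "finite (card ` {I. I \<subseteq> X \<and> indep Bs I})"
proof -
  have "{I. I \<subseteq> X \<and> indep Bs I} \<subseteq> Pow E" using indep_subset_ground by auto
  then show ?thesis using finite_ground by (simp add: finite_subset)
qed

lemma card_le_rk: "I \<subseteq> X \<Longrightarrow> indep Bs I \<Longrightarrow> card I \<le> rk Bs X"
  unfolding rk_def using finite_card_indep_subsets by (intro Max_ge) auto

lemma rk_witness: "\<exists>I. I \<subseteq> X \<and> indep Bs I \<and> card I = rk Bs X"
proof -
  have "card ` {I. I \<subseteq> X \<and> indep Bs I} \<noteq> {}" using indep_empty by blast
  from Max_in[OF finite_card_indep_subsets this] show ?thesis unfolding rk_def by auto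
qed

lemma card_base_Int_le_rk: "B \<in> Bs \<Longrightarrow> card (B \<inter> X) \<le> rk Bs X"
  by (rule card_le_rk[OF Int_lower2 indep_base_Int])

lemma rk_mono: "X \<subseteq> Y \<Longrightarrow> rk Bs X \<le> rk Bs Y"
proof -
  assume "X \<subseteq> Y"
  obtain I where "I \<subseteq> X" "indep Bs I" "card I = rk Bs X" using rk_witness by blast
  then show ?thesis using card_le_rk[of I Y] \<open>X \<subseteq> Y\<close> by simp
qed

lemma rk_le_card: "finite X \<Longrightarrow> rk Bs X \<le> card X"
proof -
  assume "finite X"
  obtain I where "I \<subseteq> X" "card I = rk Bs X" using rk_witness by blast
  then show ?thesis using card_mono[OF \<open>finite X\<close>, of I] by simp
qed

lemma rk_empty [simp]: "rk Bs {} = 0"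
  using rk_le_card[of "{}"] by simp

lemma rk_le_card_base: "B \<in> Bs \<Longrightarrow> rk Bs X \<le> card B"
proof -
  assume "B \<in> Bs"
  obtain I where "indep Bs I" "card I = rk Bs X" using rk_witness by blast
  then show ?thesis using indep_card_le_base[OF _ \<open>B \<in> Bs\<close>] by fastforce
qed

lemma rk_ground: "B \<in> Bs \<Longrightarrow> rk Bs E = card B"
  by (rule antisym[OF rk_le_card_base card_le_rk[OF base_subset indep_base]])

lemma indep_extend_to_rk:
  assumes "I \<subseteq> X" "indep Bs I"
  shows "\<exists>J. I \<subseteq> J \<and> J \<subseteq> X \<and> indep Bs J \<and> card J = rk Bs X"
proof -
  define P where "P = (\<lambda>J. I \<subseteq> J \<and> J \<subseteq> X \<and> indep Bs J)"
  obtain B where B: "B \<in> Bs" using bases_nonempty by blast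
  have "\<forall>J. P J \<longrightarrow> card J < card B + 1"
    unfolding P_def using indep_card_le_base[OF _ B] by (simp add: less_Suc_eq_le)
  moreover have "P I" using assms unfolding P_def by simp
  ultimately obtain J where J: "P J" and max: "\<And>K. P K \<Longrightarrow> card K \<le> card J"
    using ex_has_greatest_nat[of P I card] by blast
  have "card J = rk Bs X"
  proof (rule ccontr)
    assume "card J \<noteq> rk Bs X"
    moreover have "card J \<le> rk Bs X" using J card_le_rk[of J X] unfolding P_def by simp
    ultimately have less: "card J < rk Bs X" by simp
    obtain K where K: "K \<subseteq> X" "indep Bs K" "card K = rk Bs X" using rk_witness by blast
    then obtain y where y: "y \<in> K - J" "indep Bs (insert y J)"
      using indep_augment[of J K] J less unfolding P_def by auto
    moreover have "P (insert y J)" using y J K(1) unfolding P_def by blast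
    ultimately have "card (insert y J) \<le> card J" using max by blast
    moreover have "finite J" using J finite_indep unfolding P_def by simp
    ultimately show False using y(1) by simp
  qed
  then show ?thesis using J unfolding P_def by blast
qed

lemma rk_insert_le: "rk Bs (insert e X) \<le> rk Bs X + 1"
proof -
  obtain I where I: "I \<subseteq> insert e X" "indep Bs I" "card I = rk Bs (insert e X)"
    using rk_witness by blast
  have "card (I - {e}) \<le> rk Bs X" using I by (intro card_le_rk) (auto intro: indep_subset)
  moreover have "card I \<le> card (I - {e}) + 1"
    using finite_indep[OF I(2)] by (cases "e \<in> I") (simp_all add: card_Suc_Diff1)
  ultimately show ?thesis using I(3) by simp
qed

lemma rk_submodular: "rk Bs (X \<union> Y) + rk Bs (X \<inter> Y) \<le> rk Bs X + rk Bs Y"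
proof -
  obtain I where I: "I \<subseteq> X \<inter> Y" "indep Bs I" "card I = rk Bs (X \<inter> Y)"
    using rk_witness by blast
  then obtain J where J: "I \<subseteq> J" "J \<subseteq> X \<union> Y" "indep Bs J" "card J = rk Bs (X \<union> Y)"
    using indep_extend_to_rk[of I "X \<union> Y"] by blast
  have fin: "finite J" using J(3) finite_indep by blast
  have "card (J \<inter> (X \<inter> Y)) \<le> card I"
    using card_le_rk[OF Int_lower2 indep_subset[OF J(3)]] I(3) by simp
  then have JXY: "(J \<inter> X) \<inter> (J \<inter> Y) = I"
    using I(1) J(1) fin card_seteq[of "J \<inter> (X \<inter> Y)" I] by (simp add: Int_ac)
  have "(J \<inter> X) \<union> (J \<inter> Y) = J" using J(2) by blast
  then have "card J + card I = card (J \<inter> X) + card (J \<inter> Y)"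
    using card_Un_Int[of "J \<inter> X" "J \<inter> Y"] fin JXY by simp
  moreover have "card (J \<inter> X) \<le> rk Bs X" "card (J \<inter> Y) \<le> rk Bs Y"
    using card_le_rk[OF Int_lower2 indep_subset[OF J(3)]] by (simp_all add: Int_commute)
  ultimately show ?thesis using I(3) J(4) by simp
qed

lemma base_extend:
  assumes J: "indep Bs J" and B: "B \<in> Bs"
  shows "\<exists>B'\<in>Bs. J \<subseteq> B' \<and> B' \<subseteq> J \<union> B"
proof -
  obtain J' where J': "J \<subseteq> J'" "J' \<subseteq> J \<union> B" "indep Bs J'" "card J' = rk Bs (J \<union> B)"
    using indep_extend_to_rk[of J "J \<union> B"] J by blast
  have "card B \<le> card J'" using J'(4) card_le_rk[of B "J \<union> B"] indep_base[OF B] by simp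
  then have "J' \<in> Bs"
    using indep_card_eq_base_imp_base[OF J'(3) B] indep_card_le_base[OF J'(3) B] by simp
  then show ?thesis using J' by blast
qed

lemma base_swap_max_indep:
  assumes B: "B \<in> Bs" "card (B \<inter> C) = rk Bs C"
    and J: "J \<subseteq> C" "indep Bs J" "card J = rk Bs C"
  shows "(B - C) \<union> J \<in> Bs"
proof -
  obtain B' where B': "B' \<in> Bs" "J \<subseteq> B'" "B' \<subseteq> J \<union> B"
    using base_extend[OF J(2) B(1)] by blast
  have "card (B' \<inter> C) \<le> card J" using card_base_Int_le_rk[OF B'(1)] J(3) by simp
  then have B'C: "B' \<inter> C = J"
    using J(1) B'(2) finite_base[OF B'(1)] card_seteq[of "B' \<inter> C" J] by blast
  have "card (B' - C) = card (B - C)"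
    using card_Int_Diff[OF finite_base[OF B'(1)], of C] card_Int_Diff[OF finite_base[OF B(1)], of C]
      bases_card_eq[OF B'(1) B(1)] B'C J(3) B(2) by simp
  moreover have "B' - C \<subseteq> B - C" using B'(3) J(1) by blast
  ultimately have "B' - C = B - C" using card_subset_eq finite_base[OF B(1)] by blast
  then have "B' = (B - C) \<union> J" using B'C by blast
  then show ?thesis using B'(1) by simp
qed

lemma ex_base_max_Int: "\<exists>B\<in>Bs. card (B \<inter> C) = rk Bs C"
proof -
  obtain J where J: "J \<subseteq> C" "indep Bs J" "card J = rk Bs C" using rk_witness by blast
  obtain B0 where "B0 \<in> Bs" using bases_nonempty by blast
  then obtain B where B: "B \<in> Bs" "J \<subseteq> B" using base_extend[OF J(2)] by blast
  have "card J \<le> card (B \<inter> C)" using J(1) B(2) finite_base[OF B(1)] by (intro card_mono) auto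
  then show ?thesis using card_base_Int_le_rk[OF B(1), of C] J(3) B(1) by force
qed

lemma indep_restrict_bases_iff: "indep (restrict_bases Bs S) X \<longleftrightarrow> X \<subseteq> S \<and> indep Bs X"
proof
  assume "indep (restrict_bases Bs S) X"
  then obtain I where "I \<in> restrict_bases Bs S" "X \<subseteq> I" unfolding indep_def by blast
  then show "X \<subseteq> S \<and> indep Bs X" unfolding restrict_bases_def using indep_subset by blast
next
  assume "X \<subseteq> S \<and> indep Bs X"
  then obtain J where "X \<subseteq> J" "J \<subseteq> S" "indep Bs J" "card J = rk Bs S"
    using indep_extend_to_rk[of X S] by blast
  then show "indep (restrict_bases Bs S) X" unfolding indep_def restrict_bases_def by blast
qed

lemma rk_restrict_bases: "rk (restrict_bases Bs S) X = rk Bs (X \<inter> S)"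
proof -
  have "{I. I \<subseteq> X \<and> indep (restrict_bases Bs S) I} = {I. I \<subseteq> X \<inter> S \<and> indep Bs I}"
    unfolding indep_restrict_bases_iff by auto
  then show ?thesis unfolding rk_def by simp
qed

lemma matroid_restrict_bases:
  assumes "S \<subseteq> E" shows "matroid S (restrict_bases Bs S)"
  unfolding matroid_def
proof (intro conjI ballI)
  show "finite S" using assms finite_ground finite_subset by blast
  show "restrict_bases Bs S \<noteq> {}" using rk_witness[of S] unfolding restrict_bases_def by blast
  fix B assume "B \<in> restrict_bases Bs S" then show "B \<subseteq> S" unfolding restrict_bases_def by blast
next
  fix B1 B2 x
  assume B1: "B1 \<in> restrict_bases Bs S" and B2: "B2 \<in> restrict_bases Bs S" and x: "x \<in> B1 - B2"
  have fin: "finite B1" and pos: "card B1 > 0"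
    using B1 x finite_indep card_gt_0_iff unfolding restrict_bases_def by blast+
  have "card (B1 - {x}) < card B2"
    using B1 B2 x fin pos unfolding restrict_bases_def by simp
  then obtain y where y: "y \<in> B2 - (B1 - {x})" "indep Bs (insert y (B1 - {x}))"
    using indep_augment[of "B1 - {x}" B2] B1 B2 indep_subset unfolding restrict_bases_def by blast
  have "card (insert y (B1 - {x})) = rk Bs S"
    using y(1) x B1 fin pos unfolding restrict_bases_def by simp
  moreover have "insert y (B1 - {x}) \<subseteq> S" using B1 B2 y(1) unfolding restrict_bases_def by blast
  ultimately have "insert y (B1 - {x}) \<in> restrict_bases Bs S"
    using y(2) unfolding restrict_bases_def by blast
  moreover have "y \<in> B2 - B1" using y(1) x by blast
  ultimately show "\<exists>y\<in>B2 - B1. insert y (B1 - {x}) \<in> restrict_bases Bs S" by blast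
qed

lemma matroid_contract_bases:
  assumes "C \<subseteq> E" shows "matroid (E - C) (contract_bases Bs C)"
  unfolding matroid_def
proof (intro conjI ballI)
  show "finite (E - C)" using finite_ground by simp
  show "contract_bases Bs C \<noteq> {}" using ex_base_max_Int[of C] unfolding contract_bases_def by blast
  fix K assume "K \<in> contract_bases Bs C" then show "K \<subseteq> E - C"
    unfolding contract_bases_def using base_subset by blast
next
  fix K1 K2 x
  assume K1: "K1 \<in> contract_bases Bs C" and K2: "K2 \<in> contract_bases Bs C" and x: "x \<in> K1 - K2"
  obtain B1 where B1: "B1 \<in> Bs" "card (B1 \<inter> C) = rk Bs C" "K1 = B1 - C"
    using K1 unfolding contract_bases_def by blast
  obtain B2 where B2: "B2 \<in> Bs" "card (B2 \<inter> C) = rk Bs C" "K2 = B2 - C"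
    using K2 unfolding contract_bases_def by blast
  have "(B2 - C) \<union> (B1 \<inter> C) \<in> Bs"
    using base_swap_max_indep[OF B2(1,2) Int_lower2 indep_base_Int[OF B1(1)] B1(2)] .
  moreover have "x \<in> B1 - ((B2 - C) \<union> (B1 \<inter> C))" using x B1(3) B2(3) by blast
  ultimately obtain y where y: "y \<in> ((B2 - C) \<union> (B1 \<inter> C)) - B1" and B1': "insert y (B1 - {x}) \<in> Bs"
    using base_exchange[OF B1(1)] by blast
  have "x \<notin> C" "y \<notin> C" using x y B1(3) by blast+
  then have "insert y (B1 - {x}) \<inter> C = B1 \<inter> C" by blast
  then have "card (insert y (B1 - {x}) \<inter> C) = rk Bs C" using B1(2) by simp
  moreover have "insert y (K1 - {x}) = insert y (B1 - {x}) - C"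
    using y B1(3) by blast
  ultimately have "insert y (K1 - {x}) \<in> contract_bases Bs C"
    using B1' unfolding contract_bases_def by blast
  moreover have "y \<in> K2 - K1" using y B1(3) B2(3) by blast
  ultimately show "\<exists>y\<in>K2 - K1. insert y (K1 - {x}) \<in> contract_bases Bs C" by blast
qed

lemma rk_contract_bases:
  assumes C: "C \<subseteq> E" and XC: "X \<inter> C = {}"
  shows "rk (contract_bases Bs C) X = contract_rank Bs C X"
proof -
  interpret M_C: matroid_bases "E - C" "contract_bases Bs C"
    using matroid_contract_bases[OF C] by unfold_locales
  have "rk (contract_bases Bs C) X + rk Bs C \<le> rk Bs (X \<union> C)"
  proof -
    obtain I where I: "I \<subseteq> X" "indep (contract_bases Bs C) I" "card I = rk (contract_bases Bs C) X"
      using M_C.rk_witness by blast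
    then obtain B where B: "B \<in> Bs" "card (B \<inter> C) = rk Bs C" "I \<subseteq> B - C"
      unfolding indep_def contract_bases_def by blast
    have "finite I" "finite (B \<inter> C)" "I \<inter> (B \<inter> C) = {}"
      using B(3) finite_base[OF B(1)] finite_subset by blast+
    then have "card (I \<union> (B \<inter> C)) = card I + card (B \<inter> C)"
      by (rule card_Un_disjoint)
    moreover have "indep Bs (I \<union> (B \<inter> C))"
      using B(3) by (intro indep_subset[OF indep_base[OF B(1)]]) blast
    then have "card (I \<union> (B \<inter> C)) \<le> rk Bs (X \<union> C)"
      using I(1) by (intro card_le_rk) auto
    ultimately show ?thesis using I(3) B(2) by simp
  qed
  moreover have "rk Bs (X \<union> C) \<le> rk (contract_bases Bs C) X + rk Bs C"
  proof -
    obtain J where J: "J \<subseteq> C" "indep Bs J" "card J = rk Bs C" using rk_witness by blast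
    then obtain J' where J': "J \<subseteq> J'" "J' \<subseteq> X \<union> C" "indep Bs J'" "card J' = rk Bs (X \<union> C)"
      using indep_extend_to_rk[of J "X \<union> C"] by blast
    obtain B where B: "B \<in> Bs" "J' \<subseteq> B" using J'(3) unfolding indep_def by blast
    have "card J \<le> card (B \<inter> C)" using J(1) J'(1) B finite_base[OF B(1)] by (intro card_mono) auto
    then have "card (B \<inter> C) = rk Bs C" using card_base_Int_le_rk[OF B(1), of C] J(3) by linarith
    then have "indep (contract_bases Bs C) (J' - C)"
      using B unfolding indep_def contract_bases_def by auto
    then have "card (J' - C) \<le> rk (contract_bases Bs C) X"
      using J'(2) by (intro M_C.card_le_rk) auto
    moreover have "card (J' \<inter> C) \<le> rk Bs C" using card_le_rk[OF Int_lower2 indep_subset[OF J'(3)]] by simp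
    moreover have "card J' = card (J' \<inter> C) + card (J' - C)"
      using finite_indep[OF J'(3)] card_Int_Diff by blast
    ultimately show ?thesis using J'(4) by simp
  qed
  ultimately show ?thesis unfolding contract_rank_def by simp
qed

lemma rk_restrict_bases_subset: "X \<subseteq> S \<Longrightarrow> rk (restrict_bases Bs S) X = rk Bs X"
  by (simp add: rk_restrict_bases Int_absorb2)

lemma contract_bases_empty [simp]: "contract_bases Bs {} = Bs"
  unfolding contract_bases_def by simp

lemma proper_minor_empty: "E \<noteq> {} \<Longrightarrow> proper_minor E Bs {} {{}}"
proof -
  assume "E \<noteq> {}"
  have "restrict_bases Bs {} = {{}}" unfolding restrict_bases_def using indep_empty by auto
  then show ?thesis unfolding proper_minor_def
    using \<open>E \<noteq> {}\<close> by (intro exI[of _ "{}"] exI[of _ E]) simp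
qed

lemma proper_minor_delete: "e \<in> E \<Longrightarrow> proper_minor E Bs (E - {e}) (restrict_bases Bs (E - {e}))"
  unfolding proper_minor_def by (intro exI[of _ "{}"] exI[of _ "{e}"]) simp

lemma proper_minor_contract:
  "e \<in> E \<Longrightarrow> proper_minor E Bs (E - {e}) (restrict_bases (contract_bases Bs {e}) (E - {e}))"
  unfolding proper_minor_def by (intro exI[of _ "{e}"] exI[of _ "{}"]) simp

lemma contract_rank_empty [simp]: "contract_rank Bs C {} = 0"
  unfolding contract_rank_def by simp

lemma contract_rank_mono: "X \<subseteq> Y \<Longrightarrow> contract_rank Bs C X \<le> contract_rank Bs C Y"
  unfolding contract_rank_def by (intro diff_le_mono rk_mono) blast

lemma contract_rank_submodular:
  "contract_rank Bs C (X \<union> Y) + contract_rank Bs C (X \<inter> Y) \<le> contract_rank Bs C X + contract_rank Bs C Y"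
proof -
  have "rk Bs C \<le> rk Bs (Z \<union> C)" for Z by (rule rk_mono) blast
  moreover have "(X \<union> C) \<union> (Y \<union> C) = (X \<union> Y) \<union> C" "(X \<union> C) \<inter> (Y \<union> C) = (X \<inter> Y) \<union> C" by blast+
  ultimately show ?thesis
    using rk_submodular[of "X \<union> C" "Y \<union> C"] unfolding contract_rank_def by fastforce
qed

text \<open>Exchanging one element changes the size of the intersection with F by at most one,
  so the sizes met along an exchange path fill an interval.\<close>

lemma ex_base_card_Int_between:
  assumes "B1 \<in> Bs" "B2 \<in> Bs"
  shows "min (card (B1 \<inter> F)) (card (B2 \<inter> F)) \<le> v \<Longrightarrow> v \<le> max (card (B1 \<inter> F)) (card (B2 \<inter> F)) \<Longrightarrow>
    \<exists>B\<in>Bs. card (B \<inter> F) = v"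
  using assms
proof (induction B1 rule: base_exchange_induct)
  case target
  then show ?case using \<open>B2 \<in> Bs\<close> by auto
next
  case (exchange B x y)
  show ?case
  proof (cases "v = card (B \<inter> F)")
    case False
    have "min (card (insert y (B - {x}) \<inter> F)) (card (B2 \<inter> F)) \<le> v"
      "v \<le> max (card (insert y (B - {x}) \<inter> F)) (card (B2 \<inter> F))"
      using False exchange.prems card_exchange_Int_le[OF finite_base[OF exchange.hyps(1)], where x=x and y=y and F=F]
      by linarith+
    then show ?thesis by (rule exchange.IH)
  qed (use exchange.hyps(1) in blast)
qed

lemma card_Int_bases_eq_interval:
  assumes F: "F \<subseteq> E"
  shows "(\<lambda>B. card (B \<inter> F)) ` Bs = {rk Bs E - rk Bs (E - F) .. rk Bs F}"
proof
  show "(\<lambda>B. card (B \<inter> F)) ` Bs \<subseteq> {rk Bs E - rk Bs (E - F) .. rk Bs F}"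
  proof
    fix v assume "v \<in> (\<lambda>B. card (B \<inter> F)) ` Bs"
    then obtain B where B: "B \<in> Bs" "v = card (B \<inter> F)" by blast
    have "B \<inter> (E - F) = B - F" using base_subset[OF B(1)] by blast
    then have "card (B - F) \<le> rk Bs (E - F)" using card_base_Int_le_rk[OF B(1), of "E - F"] by simp
    moreover have "card B = card (B \<inter> F) + card (B - F)" using finite_base[OF B(1)] card_Int_Diff by blast
    ultimately show "v \<in> {rk Bs E - rk Bs (E - F) .. rk Bs F}"
      using B card_base_Int_le_rk[OF B(1), of F] rk_ground[OF B(1)] by simp
  qed
next
  show "{rk Bs E - rk Bs (E - F) .. rk Bs F} \<subseteq> (\<lambda>B. card (B \<inter> F)) ` Bs"
  proof
    fix v assume v: "v \<in> {rk Bs E - rk Bs (E - F) .. rk Bs F}"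
    obtain B1 where B1: "B1 \<in> Bs" "card (B1 \<inter> F) = rk Bs F" using ex_base_max_Int by blast
    obtain B2 where B2: "B2 \<in> Bs" "card (B2 \<inter> (E - F)) = rk Bs (E - F)" using ex_base_max_Int by blast
    have "B2 \<inter> (E - F) = B2 - F" using base_subset[OF B2(1)] by blast
    moreover have "card B2 = card (B2 \<inter> F) + card (B2 - F)" using finite_base[OF B2(1)] card_Int_Diff by blast
    ultimately have "card (B2 \<inter> F) = rk Bs E - rk Bs (E - F)" using B2(2) rk_ground[OF B2(1)] by simp
    then obtain B where "B \<in> Bs" "card (B \<inter> F) = v"
      using ex_base_card_Int_between[OF B1(1) B2(1), of F v] v B1(2) by auto
    then show "v \<in> (\<lambda>B. card (B \<inter> F)) ` Bs" by blast
  qed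
qed

lemma levels_eq_card_Int_bases:
  assumes F: "F \<subseteq> E"
  shows "(\<lambda>x. \<Sum>e\<in>F. x e) ` vertices Bs = real ` (\<lambda>B. card (B \<inter> F)) ` Bs"
  unfolding vertices_def image_comp comp_def
  using sum_indicator_eq_card[OF finite_subset[OF F finite_ground]] by simp

lemma card_levels:
  assumes F: "F \<subseteq> E"
  shows "card ((\<lambda>x. \<Sum>e\<in>F. x e) ` vertices Bs) + rk Bs E = rk Bs F + rk Bs (E - F) + 1"
proof -
  have "card ((\<lambda>x. \<Sum>e\<in>F. x e) ` vertices Bs) = card ((\<lambda>B. card (B \<inter> F)) ` Bs)"
    unfolding levels_eq_card_Int_bases[OF F] by (simp add: card_image)
  moreover have "rk Bs E \<le> rk Bs F + rk Bs (E - F)"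
    using rk_submodular[of F "E - F"] F by (simp add: Un_absorb1)
  moreover have "rk Bs (E - F) \<le> rk Bs E" by (rule rk_mono) blast
  ultimately show ?thesis using card_Int_bases_eq_interval[OF F] by simp
qed

lemma connected_restrict_bases_iff:
  "connected_matroid S (restrict_bases Bs S) \<longleftrightarrow> rank_connected S (rk Bs)"
  unfolding connected_matroid_iff_rank_connected
  by (rule rank_connected_cong) (rule rk_restrict_bases_subset)

lemma connected_contract_bases_iff:
  assumes "C \<subseteq> E"
  shows "connected_matroid (E - C) (contract_bases Bs C) \<longleftrightarrow> rank_connected (E - C) (contract_rank Bs C)"
  unfolding connected_matroid_iff_rank_connected
proof (rule rank_connected_cong)
  fix X assume "X \<subseteq> E - C"
  then have "X \<inter> C = {}" by blast
  then show "rk (contract_bases Bs C) X = contract_rank Bs C X" by (rule rk_contract_bases[OF assms])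
qed

definition exchange_rel :: "('a \<times> 'a) set" where
  "exchange_rel = {(x, y). \<exists>B\<in>Bs. x \<in> B \<and> y \<in> E - B \<and> insert y (B - {x}) \<in> Bs}"

lemma exchange_rel_sym: "(x, y) \<in> exchange_rel \<Longrightarrow> (y, x) \<in> exchange_rel"
proof -
  assume "(x, y) \<in> exchange_rel"
  then obtain B where B: "B \<in> Bs" "x \<in> B" "y \<in> E - B" "insert y (B - {x}) \<in> Bs"
    unfolding exchange_rel_def by blast
  define B' where "B' = insert y (B - {x})"
  have "insert x (B' - {y}) = B" "x \<in> E - B'"
    using B base_subset[OF B(1)] unfolding B'_def by auto
  moreover have "B' \<in> Bs" "y \<in> B'" using B(4) unfolding B'_def by simp_all
  ultimately show "(y, x) \<in> exchange_rel" unfolding exchange_rel_def using B(1) by auto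
qed

lemma card_Int_bases_eq_if_exchange_closed:
  assumes closed: "\<And>x y. (x, y) \<in> exchange_rel \<Longrightarrow> x \<in> T \<longleftrightarrow> y \<in> T"
    and "B1 \<in> Bs" "B2 \<in> Bs"
  shows "card (B1 \<inter> T) = card (B2 \<inter> T)"
  using \<open>B1 \<in> Bs\<close> \<open>B2 \<in> Bs\<close>
proof (induction B1 rule: base_exchange_induct)
  case (exchange B x y)
  have "(x, y) \<in> exchange_rel"
    using exchange.hyps base_subset[OF \<open>B2 \<in> Bs\<close>] unfolding exchange_rel_def by blast
  then have xy: "x \<in> T \<longleftrightarrow> y \<in> T" by (rule closed)
  have fin: "finite (B \<inter> T)" using finite_base[OF exchange.hyps(1)] by simp
  have "card (insert y (B - {x}) \<inter> T) = card (B \<inter> T)"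
  proof (cases "x \<in> T")
    case True
    then have "insert y (B - {x}) \<inter> T = insert y (B \<inter> T - {x})" using xy by blast
    moreover have "x \<in> B \<inter> T" "y \<notin> B \<inter> T - {x}" using True exchange.hyps(2,3) by auto
    moreover have "card (B \<inter> T) > 0" using \<open>x \<in> B \<inter> T\<close> fin card_gt_0_iff by blast
    ultimately show ?thesis using fin by simp
  next
    case False
    then have "insert y (B - {x}) \<inter> T = B \<inter> T" using xy by blast
    then show ?thesis by simp
  qed
  then show ?case using exchange.IH by simp
qed simp

lemma rk_eq_if_card_Int_bases_eq:
  assumes "\<And>B. B \<in> Bs \<Longrightarrow> card (B \<inter> X) = s"
  shows "rk Bs X = s"
proof (rule antisym)
  obtain I where I: "I \<subseteq> X" "indep Bs I" "card I = rk Bs X" using rk_witness by blast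
  then obtain B where B: "B \<in> Bs" "I \<subseteq> B" unfolding indep_def by blast
  have "card I \<le> card (B \<inter> X)" using I(1) B(2) finite_base[OF B(1)] by (intro card_mono) auto
  then show "rk Bs X \<le> s" using I(3) assms[OF B(1)] by simp
next
  obtain B where B: "B \<in> Bs" using bases_nonempty by blast
  show "s \<le> rk Bs X" using card_base_Int_le_rk[OF B, of X] assms[OF B] by simp
qed

lemma separator_if_card_Int_bases_eq:
  assumes T: "T \<subseteq> E" and const: "\<And>B1 B2. B1 \<in> Bs \<Longrightarrow> B2 \<in> Bs \<Longrightarrow> card (B1 \<inter> T) = card (B2 \<inter> T)"
  shows "rk Bs T + rk Bs (E - T) = rk Bs E"
proof -
  obtain B0 where B0: "B0 \<in> Bs" using bases_nonempty by blast
  have split: "card B = card (B \<inter> T) + card (B \<inter> (E - T))" if B: "B \<in> Bs" for B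
  proof -
    have "B \<inter> (E - T) = B - T" using base_subset[OF B] by blast
    then show ?thesis using card_Int_Diff[OF finite_base[OF B], of T] by simp
  qed
  have "rk Bs T = card (B0 \<inter> T)"
    using const[OF _ B0] by (rule rk_eq_if_card_Int_bases_eq)
  moreover have "rk Bs (E - T) = card (B0 \<inter> (E - T))"
  proof (rule rk_eq_if_card_Int_bases_eq)
    fix B assume B: "B \<in> Bs"
    show "card (B \<inter> (E - T)) = card (B0 \<inter> (E - T))"
      using split[OF B] split[OF B0] bases_card_eq[OF B B0] const[OF B B0] by simp
  qed
  ultimately show ?thesis using split[OF B0] rk_ground[OF B0] by simp
qed

lemma connected_imp_exchange_rtrancl:
  assumes conn: "connected_matroid E Bs" and "x \<in> E" "y \<in> E"
  shows "(x, y) \<in> exchange_rel\<^sup>*"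
proof -
  define T where "T = {z \<in> E. (x, z) \<in> exchange_rel\<^sup>*}"
  have into_T: "b \<in> T" if ab: "(a, b) \<in> exchange_rel" and "a \<in> T" for a b
  proof -
    have "(x, b) \<in> exchange_rel\<^sup>*" using \<open>a \<in> T\<close> ab unfolding T_def by auto
    moreover have "b \<in> E" using ab unfolding exchange_rel_def by blast
    ultimately show ?thesis unfolding T_def by blast
  qed
  have closed: "a \<in> T \<longleftrightarrow> b \<in> T" if "(a, b) \<in> exchange_rel" for a b
    using into_T[OF that] into_T[OF exchange_rel_sym[OF that]] by blast
  have TE: "T \<subseteq> E" unfolding T_def by blast
  have "rk Bs T + rk Bs (E - T) = rk Bs E"
  proof (rule separator_if_card_Int_bases_eq[OF TE])
    show "card (B1 \<inter> T) = card (B2 \<inter> T)" if "B1 \<in> Bs" "B2 \<in> Bs" for B1 B2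
      using closed that by (rule card_Int_bases_eq_if_exchange_closed)
  qed
  moreover have "x \<in> T" using \<open>x \<in> E\<close> unfolding T_def by simp
  ultimately have "T = E" using conn TE unfolding connected_matroid_def by blast
  then show ?thesis using \<open>y \<in> E\<close> unfolding T_def by blast
qed

text \<open>An exchange of x for y between two bases forces equal weights on x and y, and in a
  connected matroid such exchanges link any two elements.\<close>

lemma connected_weight_const:
  fixes a :: "'a \<Rightarrow> real"
  assumes conn: "connected_matroid E Bs"
    and const: "\<And>B1 B2. B1 \<in> Bs \<Longrightarrow> B2 \<in> Bs \<Longrightarrow> sum a B1 = sum a B2"
  shows "\<exists>\<alpha>. \<forall>x\<in>E. a x = \<alpha>"
proof -
  have exchange_eq: "a x = a y" if xy: "(x, y) \<in> exchange_rel" for x y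
  proof -
    obtain B where B: "B \<in> Bs" "x \<in> B" "y \<in> E - B" "insert y (B - {x}) \<in> Bs"
      using xy unfolding exchange_rel_def by blast
    have "sum a B = a x + sum a (B - {x})" using B(2) finite_base[OF B(1)] by (simp add: sum.remove)
    moreover have "sum a (insert y (B - {x})) = a y + sum a (B - {x})"
      using B(3) finite_base[OF B(1)] by simp
    ultimately show ?thesis using const[OF B(1) B(4)] by simp
  qed
  have eq: "a x = a y" if "x \<in> E" "y \<in> E" for x y
    using connected_imp_exchange_rtrancl[OF conn that]
  proof (induction rule: rtrancl_induct)
    case (step y z)
    then show ?case using exchange_eq[of y z] by simp
  qed simp
  show ?thesis
  proof (cases "E = {}")
    case False
    then obtain x0 where "x0 \<in> E" by blast
    then have "\<forall>x\<in>E. a x = a x0" using eq by blast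
    then show ?thesis ..
  qed simp
qed

lemma face_weight_split:
  fixes a :: "'a \<Rightarrow> real"
  assumes F: "F \<subseteq> E"
    and conn_restr: "connected_matroid F (restrict_bases Bs F)"
    and conn_contr: "connected_matroid (E - F) (contract_bases Bs F)"
    and zero: "\<And>B. B \<in> Bs \<Longrightarrow> card (B \<inter> F) = rk Bs F \<Longrightarrow> c + sum a B = 0"
  shows "\<exists>\<alpha> \<beta>. \<forall>B\<in>Bs. sum a B = \<alpha> * real (card (B \<inter> F)) + \<beta> * real (card (B - F))"
proof -
  obtain B0 where B0: "B0 \<in> Bs" "card (B0 \<inter> F) = rk Bs F" using ex_base_max_Int by blast
  have sum_split: "sum a B = sum a (B \<inter> F) + sum a (B - F)" if "B \<in> Bs" for B
    using sum.Int_Diff[OF finite_base[OF that]] .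
  interpret M_F: matroid_bases F "restrict_bases Bs F"
    using matroid_restrict_bases[OF F] by unfold_locales
  have "sum a I = - c - sum a (B0 - F)" if I: "I \<in> restrict_bases Bs F" for I
  proof -
    have I': "I \<subseteq> F" "indep Bs I" "card I = rk Bs F" using I unfolding restrict_bases_def by auto
    have B: "(B0 - F) \<union> I \<in> Bs" using base_swap_max_indep[OF B0 I'] .
    moreover have "((B0 - F) \<union> I) \<inter> F = I" "(B0 - F) \<union> I - F = B0 - F" using I'(1) by blast+
    ultimately show ?thesis using zero[OF B] sum_split[OF B] I'(3) by simp
  qed
  then obtain \<alpha> where \<alpha>: "\<forall>x\<in>F. a x = \<alpha>"
    using M_F.connected_weight_const[OF conn_restr] by force
  interpret M_C: matroid_bases "E - F" "contract_bases Bs F"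
    using matroid_contract_bases[OF F] by unfold_locales
  have "sum a K = - c - sum a (B0 \<inter> F)" if K: "K \<in> contract_bases Bs F" for K
  proof -
    obtain B where B: "B \<in> Bs" "card (B \<inter> F) = rk Bs F" "K = B - F"
      using K unfolding contract_bases_def by blast
    have B': "(B - F) \<union> (B0 \<inter> F) \<in> Bs"
      using base_swap_max_indep[OF B(1,2) Int_lower2 indep_base_Int[OF B0(1)] B0(2)] .
    moreover have "((B - F) \<union> (B0 \<inter> F)) \<inter> F = B0 \<inter> F" "(B - F) \<union> (B0 \<inter> F) - F = B - F" by blast+
    ultimately show ?thesis using zero[OF B'] sum_split[OF B'] B0(2) B(3) by simp
  qed
  then obtain \<beta> where \<beta>: "\<forall>x\<in>E - F. a x = \<beta>"
    using M_C.connected_weight_const[OF conn_contr] by force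
  have "sum a B = \<alpha> * card (B \<inter> F) + \<beta> * card (B - F)" if B: "B \<in> Bs" for B
  proof -
    have "sum a (B \<inter> F) = \<alpha> * card (B \<inter> F)" using \<alpha> by simp
    moreover have "sum a (B - F) = \<beta> * card (B - F)" using \<beta> base_subset[OF B] by (simp add: subset_iff)
    ultimately show ?thesis using sum_split[OF B] by simp
  qed
  then show ?thesis by blast
qed

lemma zero_on_all_bases_if_zero_beyond_face:
  fixes a :: "'a \<Rightarrow> real"
  assumes F: "F \<subseteq> E"
    and conn_restr: "connected_matroid F (restrict_bases Bs F)"
    and conn_contr: "connected_matroid (E - F) (contract_bases Bs F)"
    and zero: "\<And>B. B \<in> Bs \<Longrightarrow> card (B \<inter> F) = rk Bs F \<Longrightarrow> c + sum a B = 0"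
    and B: "B \<in> Bs" "c + sum a B = 0" "card (B \<inter> F) \<noteq> rk Bs F"
  shows "\<forall>B'\<in>Bs. c + sum a B' = 0"
proof -
  obtain \<alpha> \<beta> where split: "\<And>B. B \<in> Bs \<Longrightarrow> sum a B = \<alpha> * real (card (B \<inter> F)) + \<beta> * real (card (B - F))"
    using face_weight_split[OF F conn_restr conn_contr zero] by blast
  have card_Diff: "real (card (B' - F)) = real (rk Bs E) - real (card (B' \<inter> F))" if "B' \<in> Bs" for B'
    using card_Int_Diff[OF finite_base[OF that], of F] rk_ground[OF that] by simp
  obtain B0 where B0: "B0 \<in> Bs" "card (B0 \<inter> F) = rk Bs F" using ex_base_max_Int by blast
  then have "(\<alpha> - \<beta>) * (real (card (B \<inter> F)) - real (rk Bs F)) = 0"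
    using zero[OF B0] B(2) split[OF B(1)] split[OF B0(1)] card_Diff[OF B(1)] card_Diff[OF B0(1)]
    by (simp add: algebra_simps)
  then have "\<alpha> = \<beta>" using B(3) by simp
  then have "c + sum a B' = c + sum a B" if "B' \<in> Bs" for B'
    using split[OF that] split[OF B(1)] card_Diff[OF that] card_Diff[OF B(1)] by (simp add: algebra_simps)
  then show ?thesis using B(2) by simp
qed

lemma aff_flacet_indicator:
  assumes B: "B \<in> Bs"
  shows "aff E (\<lambda>e. if e \<in> F then -1 else 0) (real (rk Bs F)) (indicator B)
    = real (rk Bs F) - real (card (B \<inter> F))"
proof -
  have "(\<Sum>e\<in>B. if e \<in> F then -1 else 0 :: real) = - real (card (B \<inter> F))"
    using sum.inter_restrict[OF finite_base[OF B], of "\<lambda>_. -1 :: real" F] by simp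
  then show ?thesis using aff_indicator[OF finite_ground base_subset[OF B]] by simp
qed

lemma facet_defining_flacet:
  assumes F: "F \<subseteq> E"
    and conn_restr: "connected_matroid F (restrict_bases Bs F)"
    and conn_contr: "connected_matroid (E - F) (contract_bases Bs F)"
    and nonconst: "B1 \<in> Bs" "card (B1 \<inter> F) \<noteq> rk Bs F"
  shows "facet_defining E (vertices Bs) (\<lambda>e. if e \<in> F then -1 else 0) (real (rk Bs F))"
proof -
  define slack where "slack = aff E (\<lambda>e. if e \<in> F then -1 else 0) (real (rk Bs F))"
  define Z where "Z = {v \<in> vertices Bs. slack v = 0}"
  have slack_B: "slack (indicator B) = real (rk Bs F) - real (card (B \<inter> F))" if "B \<in> Bs" for B
    unfolding slack_def by (rule aff_flacet_indicator[OF that])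
  have nonneg: "\<forall>v\<in>vertices Bs. slack v \<ge> 0"
    unfolding vertices_def using slack_B card_base_Int_le_rk by auto
  have Z_iff: "indicator B \<in> Z \<longleftrightarrow> card (B \<inter> F) = rk Bs F" if "B \<in> Bs" for B
    using that slack_B[OF that] unfolding Z_def vertices_def by auto
  have "Z \<noteq> vertices Bs"
    using Z_iff[OF nonconst(1)] nonconst unfolding vertices_def by blast
  moreover have "Z' = Z"
    if face: "is_face E (vertices Bs) Z'" and proper: "Z' \<noteq> vertices Bs" and "Z \<subseteq> Z'" for Z'
  proof -
    obtain a c where Z': "Z' = {v \<in> vertices Bs. aff E a c v = 0}"
      using face unfolding is_face_def by blast
    have Z'_iff: "indicator B \<in> Z' \<longleftrightarrow> c + sum a B = 0" if "B \<in> Bs" for B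
      using that aff_indicator[OF finite_ground base_subset[OF that]] unfolding Z' vertices_def by auto
    have zero: "c + sum a B = 0" if "B \<in> Bs" "card (B \<inter> F) = rk Bs F" for B
      using Z_iff[OF that(1)] Z'_iff[OF that(1)] that(2) \<open>Z \<subseteq> Z'\<close> by blast
    have "card (B \<inter> F) = rk Bs F" if B: "B \<in> Bs" "c + sum a B = 0" for B
    proof (rule ccontr)
      assume "card (B \<inter> F) \<noteq> rk Bs F"
      then have "\<forall>B'\<in>Bs. c + sum a B' = 0"
        using zero_on_all_bases_if_zero_beyond_face[OF F conn_restr conn_contr zero B] by blast
      then have "Z' = vertices Bs" using Z'_iff unfolding Z' vertices_def by auto
      then show False using proper by contradiction
    qed
    then show "Z' = Z"
      using \<open>Z \<subseteq> Z'\<close> Z_iff Z'_iff unfolding Z' vertices_def by auto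
  qed
  ultimately show ?thesis
    using nonneg unfolding facet_defining_def is_facet_def is_face_def Z_def slack_def by blast
qed

lemma levels_le_levelness:
  assumes F: "F \<subseteq> E"
    and conn_restr: "connected_matroid F (restrict_bases Bs F)"
    and conn_contr: "connected_matroid (E - F) (contract_bases Bs F)"
    and two: "2 \<le> card ((\<lambda>x. \<Sum>e\<in>F. x e) ` vertices Bs)"
  shows "card ((\<lambda>x. \<Sum>e\<in>F. x e) ` vertices Bs) \<le> levelness E Bs"
proof -
  define slack where "slack = aff E (\<lambda>e. if e \<in> F then -1 else 0) (real (rk Bs F))"
  have levels: "(\<lambda>x. \<Sum>e\<in>F. x e) ` vertices Bs = real ` (\<lambda>B. card (B \<inter> F)) ` Bs"
    by (rule levels_eq_card_Int_bases[OF F])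
  have "\<exists>B1\<in>Bs. card (B1 \<inter> F) \<noteq> rk Bs F"
  proof (rule ccontr)
    assume "\<not> ?thesis"
    then have "(\<lambda>x. \<Sum>e\<in>F. x e) ` vertices Bs \<subseteq> {real (rk Bs F)}" unfolding levels by auto
    then have "card ((\<lambda>x. \<Sum>e\<in>F. x e) ` vertices Bs) \<le> card {real (rk Bs F)}"
      by (intro card_mono) simp_all
    then show False using two by simp
  qed
  then obtain B1 where B1: "B1 \<in> Bs" "card (B1 \<inter> F) \<noteq> rk Bs F" by blast
  have "slack ` vertices Bs = (\<lambda>u. real (rk Bs F) - u) ` (\<lambda>x. \<Sum>e\<in>F. x e) ` vertices Bs"
    unfolding levels unfolding vertices_def image_comp comp_def slack_def
    using aff_flacet_indicator by simp
  then have "card (slack ` vertices Bs) = card ((\<lambda>x. \<Sum>e\<in>F. x e) ` vertices Bs)"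
    by (simp add: card_image inj_on_def)
  moreover have "card (slack ` vertices Bs) \<le> levelness E Bs"
    using card_aff_image_le_levelness[OF finite_bases facet_defining_flacet[OF F conn_restr conn_contr B1]]
    unfolding slack_def .
  ultimately show ?thesis by simp
qed

lemma rk_delete_eq_superset:
  assumes "X \<subseteq> Y" "e \<in> X" "rk Bs (X - {e}) = rk Bs X"
  shows "rk Bs (Y - {e}) = rk Bs Y"
proof (rule antisym)
  have "(Y - {e}) \<union> X = Y" "(Y - {e}) \<inter> X = X - {e}" using assms(1,2) by blast+
  then show "rk Bs Y \<le> rk Bs (Y - {e})"
    using rk_submodular[of "Y - {e}" X] assms(3) by simp
qed (rule rk_mono, blast)

lemma ex_nonessential_if_dependent:
  assumes "finite X" "rk Bs X \<noteq> card X"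
  shows "\<exists>e\<in>X. rk Bs (X - {e}) = rk Bs X"
proof -
  obtain I where I: "I \<subseteq> X" "indep Bs I" "card I = rk Bs X" using rk_witness by blast
  moreover have "I \<noteq> X" using I(3) assms(2) by auto
  ultimately obtain e where e: "e \<in> X" "e \<notin> I" by blast
  then have "I \<subseteq> X - {e}" using I(1) by blast
  then have "rk Bs X \<le> rk Bs (X - {e})" using I(2,3) card_le_rk[of I "X - {e}"] by simp
  then show ?thesis using e rk_mono[of "X - {e}" X] by (intro bexI[OF _ e(1)]) simp
qed

lemma rk_insert_notin_flat:
  assumes flat: "flat E Bs F" and e: "e \<in> E - F" and Y: "Y \<subseteq> F"
  shows "rk Bs (insert e Y) = rk Bs Y + 1"
proof (rule antisym[OF rk_insert_le])
  have "insert e Y \<union> F = insert e F" "insert e Y \<inter> F = Y" using Y e by blast+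
  then have "rk Bs (insert e F) + rk Bs Y \<le> rk Bs (insert e Y) + rk Bs F"
    using rk_submodular[of "insert e Y" F] by simp
  moreover have "rk Bs F < rk Bs (insert e F)" using flat e unfolding flat_def by blast
  ultimately show "rk Bs Y + 1 \<le> rk Bs (insert e Y)" by simp
qed

lemma levelness_ge_if_rank_connected:
  assumes F: "F \<subseteq> E"
    and conn_restr: "rank_connected F (rk Bs)"
    and conn_contr: "rank_connected (E - F) (contract_rank Bs F)"
    and levels: "rk Bs F + rk Bs (E - F) + 1 = rk Bs E + k" and k: "2 \<le> k"
  shows "k \<le> levelness E Bs"
proof -
  have "card ((\<lambda>x. \<Sum>e\<in>F. x e) ` vertices Bs) = k" using card_levels[OF F] levels by simp
  then show ?thesis
    using levels_le_levelness[OF F] conn_restr conn_contr k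
    unfolding connected_restrict_bases_iff connected_contract_bases_iff[OF F] by simp
qed

lemma contract_rank_delete_or_contract:
  assumes F: "F \<subseteq> E" and e: "e \<in> E - F" and nonessential: "rk Bs (E - F - {e}) = rk Bs (E - F)"
    and conn_contr: "connected_matroid (E - F) (contract_bases Bs F)"
  shows "rank_connected (E - F - {e}) (contract_rank Bs F) \<or>
    rank_connected (E - F - {e}) (\<lambda>X. contract_rank Bs F (insert e X) - contract_rank Bs F {e})"
proof (rule rank_connected_delete_or_contract)
  have "(E - F - {e}) \<union> F = E - {e}" "(E - F) \<union> F = E" using F e by blast+
  then show "contract_rank Bs F (E - F - {e}) = contract_rank Bs F (E - F)"
    using rk_delete_eq_superset[of "E - F" E e] nonessential e unfolding contract_rank_def by simp
  show "contract_rank Bs F {e} \<le> 1"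
    using rk_insert_le[of e F] unfolding contract_rank_def by simp
  show "rank_connected (E - F) (contract_rank Bs F)"
    using conn_contr connected_contract_bases_iff[OF F] by simp
qed (use e contract_rank_submodular contract_rank_mono in auto)

lemma levelness_delete_ge:
  assumes F: "F \<subseteq> E" and e: "e \<in> E - F" and nonessential: "rk Bs (E - F - {e}) = rk Bs (E - F)"
    and conn_restr: "connected_matroid F (restrict_bases Bs F)"
    and conn: "rank_connected (E - F - {e}) (contract_rank Bs F)"
    and levels: "rk Bs F + rk Bs (E - F) + 1 = rk Bs E + k" and k: "2 \<le> k"
  shows "k \<le> levelness (E - {e}) (restrict_bases Bs (E - {e}))"
proof -
  define Bs' where "Bs' = restrict_bases Bs (E - {e})"
  interpret M': matroid_bases "E - {e}" Bs'
    unfolding Bs'_def by unfold_locales (rule matroid_restrict_bases, blast)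
  have rk': "rk Bs' X = rk Bs X" if "X \<subseteq> E - {e}" for X
    unfolding Bs'_def using that by (rule rk_restrict_bases_subset)
  have FE': "F \<subseteq> E - {e}" and E'F: "E - {e} - F = E - F - {e}" using F e by blast+
  have "k \<le> levelness (E - {e}) Bs'"
  proof (rule M'.levelness_ge_if_rank_connected[OF FE'])
    show "rank_connected F (rk Bs')"
      using conn_restr rk' FE' unfolding connected_restrict_bases_iff
      by (subst rank_connected_cong[of F "rk Bs'" "rk Bs"]) auto
    have "contract_rank Bs' F X = contract_rank Bs F X" if "X \<subseteq> E - {e} - F" for X
    proof -
      have "X \<union> F \<subseteq> E - {e}" using that FE' by blast
      then show ?thesis using rk'[OF FE'] rk'[of "X \<union> F"] unfolding contract_rank_def by simp
    qed
    then show "rank_connected (E - {e} - F) (contract_rank Bs' F)"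
      using conn unfolding E'F by (subst rank_connected_cong) auto
    have "rk Bs (E - {e}) = rk Bs E"
      using rk_delete_eq_superset[of "E - F" E e] nonessential e by simp
    moreover have "E - {e} - F \<subseteq> E - {e}" by blast
    ultimately show "rk Bs' F + rk Bs' (E - {e} - F) + 1 = rk Bs' (E - {e}) + k"
      using levels nonessential rk'[OF FE'] rk'[of "E - {e}"] rk'[of "E - {e} - F"] E'F by simp
  qed (rule k)
  then show ?thesis unfolding Bs'_def .
qed

lemma levelness_contract_ge:
  assumes F: "F \<subseteq> E" and flat: "flat E Bs F" and e: "e \<in> E - F"
    and conn_restr: "connected_matroid F (restrict_bases Bs F)"
    and conn: "rank_connected (E - F - {e}) (\<lambda>X. contract_rank Bs F (insert e X) - contract_rank Bs F {e})"
    and levels: "rk Bs F + rk Bs (E - F) + 1 = rk Bs E + k" and k: "2 \<le> k"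
  shows "k \<le> levelness (E - {e}) (restrict_bases (contract_bases Bs {e}) (E - {e}))"
proof -
  define Bs' where "Bs' = restrict_bases (contract_bases Bs {e}) (E - {e})"
  have e_insert: "rk Bs (insert e Y) = rk Bs Y + 1" if "Y \<subseteq> F" for Y
    using rk_insert_notin_flat[OF flat e that] .
  have eE: "{e} \<subseteq> E" using e by blast
  interpret M_e: matroid_bases "E - {e}" "contract_bases Bs {e}"
    using matroid_contract_bases[OF eE] by unfold_locales
  interpret M': matroid_bases "E - {e}" Bs'
    unfolding Bs'_def by unfold_locales (rule M_e.matroid_restrict_bases, blast)
  have rk': "rk Bs' X = rk Bs (insert e X) - 1" if "X \<subseteq> E - {e}" for X
  proof -
    have "rk Bs' X = contract_rank Bs {e} X"
      unfolding Bs'_def using that M_e.rk_restrict_bases_subset rk_contract_bases[OF eE] by auto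
    then show ?thesis using e_insert[of "{}"] unfolding contract_rank_def by simp
  qed
  have FE': "F \<subseteq> E - {e}" and E'F: "E - {e} - F = E - F - {e}" using F e by blast+
  have "k \<le> levelness (E - {e}) Bs'"
  proof (rule M'.levelness_ge_if_rank_connected[OF FE'])
    show "rank_connected F (rk Bs')"
      using conn_restr unfolding connected_restrict_bases_iff
      by (subst rank_connected_cong[of F "rk Bs'" "rk Bs"]) (use FE' rk' e_insert in auto)
    have "contract_rank Bs' F X = contract_rank Bs F (insert e X) - contract_rank Bs F {e}"
      if "X \<subseteq> E - {e} - F" for X
    proof -
      have "rk Bs F \<le> rk Bs (insert e F)" "rk Bs (insert e F) \<le> rk Bs (insert e (X \<union> F))"
        by (rule rk_mono, blast)+
      moreover have "insert e X \<union> F = insert e (X \<union> F)" "{e} \<union> F = insert e F" by blast+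
      moreover have "X \<union> F \<subseteq> E - {e}" using that FE' by blast
      ultimately show ?thesis
        using rk'[OF FE'] rk'[of "X \<union> F"] e_insert[of F] unfolding contract_rank_def by simp
    qed
    then show "rank_connected (E - {e} - F) (contract_rank Bs' F)"
      using conn unfolding E'F by (subst rank_connected_cong) auto
    have "insert e (E - {e}) = E" "insert e (E - {e} - F) = E - F" using e by blast+
    moreover have "1 \<le> rk Bs (E - F)" "rk Bs (E - F) \<le> rk Bs E"
      using e_insert[of "{}"] rk_mono[of "{e}" "E - F"] rk_mono[of "E - F" E] e by auto
    ultimately show "rk Bs' F + rk Bs' (E - {e} - F) + 1 = rk Bs' (E - {e}) + k"
      using levels rk'[OF FE'] e_insert[of F] rk'[of "E - {e}"] rk'[of "E - {e} - F"] by simp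
  qed (rule k)
  then show ?thesis unfolding Bs'_def .
qed

end

theorem proposition6p4:
  fixes E :: "'a set" and Bs :: "'a set set" and F :: "'a set" and k :: nat
  assumes "matroid E Bs"
    and "minimally_level E Bs k"
    and "k_level_flacet E Bs k F"
  shows "rk Bs (E - F) = card (E - F)"
proof (rule ccontr)
  assume dependent: "rk Bs (E - F) \<noteq> card (E - F)"
  interpret matroid_bases E Bs by (rule matroid_bases.intro) (rule assms(1))
  have F: "F \<subseteq> E" "F \<noteq> {}" and flat: "flat E Bs F"
    and conn_restr: "connected_matroid F (restrict_bases Bs F)"
    and conn_contr: "connected_matroid (E - F) (contract_bases Bs F)"
    and k_levels: "card ((\<lambda>x. \<Sum>e\<in>F. x e) ` vertices Bs) = k"
    using assms(3) unfolding k_level_flacet_def flacet_def by auto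
  have minor: "levelness E' Bs' < k" if "proper_minor E Bs E' Bs'" for E' Bs'
    using assms(2) that unfolding minimally_level_def by blast
  have "E \<noteq> {}" using F by blast
  then have "2 \<le> k"
    using minor[OF proper_minor_empty] levelness_empty_matroid_pos[where 'a = 'a] by simp
  moreover have levels: "rk Bs F + rk Bs (E - F) + 1 = rk Bs E + k"
    using card_levels[OF F(1)] k_levels by simp
  moreover obtain e where e: "e \<in> E - F" and nonessential: "rk Bs (E - F - {e}) = rk Bs (E - F)"
    using ex_nonessential_if_dependent[OF _ dependent] finite_ground by blast
  ultimately have "k \<le> levelness (E - {e}) (restrict_bases Bs (E - {e})) \<or>
      k \<le> levelness (E - {e}) (restrict_bases (contract_bases Bs {e}) (E - {e}))"
    using contract_rank_delete_or_contract[OF F(1) e nonessential conn_contr]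
      levelness_delete_ge[OF F(1) e nonessential conn_restr]
      levelness_contract_ge[OF F(1) flat e conn_restr] by blast
  then show False
    using minor[OF proper_minor_delete] minor[OF proper_minor_contract] e by fastforce
qed

end
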